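(* Let $\mathcal{N}$ be the Noperthedron. For all $\theta,\varphi,\alpha\in\mathbb{R}$ the following equalities of sets hold: \[ M(\theta+2\pi/15,\varphi)\mathcal{N}=M(\theta,\varphi)\mathcal{N},\qquad R(\alpha+\pi)M(\theta,\varphi)\mathcal{N}=R(\alpha)M(\theta,\varphi)\mathcal{N}, \] \[ \begin{pmatrix}1&0\\0&-1\end{pmatrix}M(\theta,\varphi)\mathcal{N}=M(\theta+\pi/15,\pi-\varphi)\mathcal{N}. \]
   Context: $R(\alpha)=\begin{pmatrix}\cos\alpha&-\sin\alpha\\ \sin\alpha&\cos\alpha\end{pmatrix}$, $M(\theta,\varphi)=\begin{pmatrix}-\sin\theta&\cos\theta&0\\ -\cos\theta\cos\varphi&-\sin\theta\cos\varphi&\sin\varphi\end{pmatrix}$, acting elementwise on point sets. Let $R_z(\beta)=\begin{pmatrix}\cos\beta&-\sin\beta&0\\ \sin\beta&\cos\beta&0\\0&0&1\end{pmatrix}$, $\mathcal{C}_{30}=\{(-1)^\ell R_z(2\pi k/15): k=0,\dots,14,\ \ell=0,1\}$, $C_1=\frac{1}{259375205}(152024884,0,210152163)^t$, $C_2=10^{-10}(6632738028,6106948881,3980949609)^t$, $C_3=10^{-10}(8193990033,5298215096,1230614493)^t$, and $\mathcal{N}=\mathcal{C}_{30}C_1\cup\mathcal{C}_{30}C_2\cup\mathcal{C}_{30}C_3$. *)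

theory Defs
  imports "HOL-Analysis.Analysis"
begin

definition rot2 :: "real \<Rightarrow> real^2^2" where
  "rot2 \<alpha> = vector [vector [cos \<alpha>, - sin \<alpha>], vector [sin \<alpha>, cos \<alpha>]]"

definition projM :: "real \<Rightarrow> real \<Rightarrow> real^3^2" where
  "projM \<theta> \<phi> = vector [vector [- sin \<theta>, cos \<theta>, 0],
                         vector [- cos \<theta> * cos \<phi>, - sin \<theta> * cos \<phi>, sin \<phi>]]"

definition rotz :: "real \<Rightarrow> real^3^3" where
  "rotz \<beta> = vector [vector [cos \<beta>, - sin \<beta>, 0], vector [sin \<beta>, cos \<beta>, 0], vector [0, 0, 1]]"

definition flip2 :: "real^2^2" where
  "flip2 = vector [vector [1, 0], vector [0, -1]]"

definition C30 :: "(real^3^3) set" where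
  "C30 = {((-1) ^ l) *\<^sub>R rotz (2 * pi * real k / 15) | k l. k < (15::nat) \<and> l < (2::nat)}"

definition C1 :: "real^3" where
  "C1 = (1 / 259375205) *\<^sub>R vector [152024884, 0, 210152163]"
definition C2 :: "real^3" where
  "C2 = (10 powi (-10)) *\<^sub>R vector [6632738028, 6106948881, 3980949609]"
definition C3 :: "real^3" where
  "C3 = (10 powi (-10)) *\<^sub>R vector [8193990033, 5298215096, 1230614493]"

definition noperthedron :: "(real^3) set" where
  "noperthedron = (\<lambda>A. A *v C1) ` C30 \<union> (\<lambda>A. A *v C2) ` C30 \<union> (\<lambda>A. A *v C3) ` C30"

end

theory Submission
  imports Defs
begin

text \<open>Letting the exponents range over all integers shows that \<open>C30\<close> is a group, so
  every element of \<open>C30\<close> maps the Noperthedron onto itself. Each identity then says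
  that one linear map equals another composed with a suitable element of \<open>C30\<close>:
  \<open>R\<^sub>z(-2\<pi>/15)\<close>, \<open>-I\<close> and \<open>-R\<^sub>z(-14\<pi>/15)\<close> respectively.\<close>

lemma scaleR_matrix_matrix_mult:
  fixes A :: "'a::real_algebra_1^'n^'m" and B :: "'a^'p^'n"
  shows "(a *\<^sub>R A) ** (b *\<^sub>R B) = (a * b) *\<^sub>R (A ** B)"
  by (simp add: vec_eq_iff matrix_matrix_mult_def scaleR_sum_right mult.commute)

lemma matrix_mul_uminus_left: "(- A) ** B = - (A ** (B :: 'a::ring_1^'p^'n))"
  by (simp add: vec_eq_iff matrix_matrix_mult_def sum_negf)

lemma matrix_mul_uminus_right: "A ** (- B) = - (A ** (B :: 'a::ring_1^'p^'n))"
  by (simp add: vec_eq_iff matrix_matrix_mult_def sum_negf)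

lemma rotz_add: "rotz a ** rotz b = rotz (a + b)"
  by (simp add: vec_eq_iff forall_3 matrix_matrix_mult_def sum_3 rotz_def cos_add sin_add
      algebra_simps)

lemma rotz_zero: "rotz 0 = mat 1"
  by (simp add: vec_eq_iff forall_3 rotz_def mat_def)

lemma rotz_periodic: "rotz (a + 2 * pi * of_int q) = rotz a"
  by (simp add: rotz_def cos_add sin_add)

lemma projM_mult_rotz: "projM a p ** rotz b = projM (a - b) p"
  by (simp add: vec_eq_iff forall_2 forall_3 matrix_matrix_mult_def sum_3 projM_def rotz_def
      cos_diff sin_diff algebra_simps)

lemma rot2_add_pi: "rot2 (a + pi) = - rot2 a"
  by (simp add: vec_eq_iff forall_2 rot2_def)

lemma flip2_mult_projM: "flip2 ** projM t p = - projM (t + pi) (pi - p)"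
  by (simp add: vec_eq_iff forall_2 forall_3 matrix_matrix_mult_def sum_2 flip2_def projM_def)

lemma C30_memI: "((-1) ^ l) *\<^sub>R rotz (2 * pi * of_int j / 15) \<in> C30"
proof -
  have "real_of_int j = 15 * of_int (j div 15) + of_int (j mod 15)"
    by (metis div_mult_mod_eq mult.commute of_int_add of_int_mult of_int_numeral)
  then have "2 * pi * of_int j / 15 = 2 * pi * real (nat (j mod 15)) / 15 + 2 * pi * of_int (j div 15)"
    by (simp add: field_simps)
  then have "rotz (2 * pi * of_int j / 15) = rotz (2 * pi * real (nat (j mod 15)) / 15)"
    by (simp only: rotz_periodic)
  moreover have "(-1::real) ^ l = (-1) ^ (l mod 2)"
    by (simp add: minus_one_power_iff)
  ultimately show ?thesis
    unfolding C30_def by (intro CollectI exI[of _ "l mod 2"] exI[of _ "nat (j mod 15)"]) simp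
qed

lemma C30_eq: "C30 = {((-1) ^ l) *\<^sub>R rotz (2 * pi * of_int j / 15) | j l. True}"
proof
  show "C30 \<subseteq> {((-1) ^ l) *\<^sub>R rotz (2 * pi * of_int j / 15) | j l. True}"
    unfolding C30_def by (force intro: exI[of _ "int k" for k])
qed (use C30_memI in blast)

lemma C30_elem_mult:
  "(((-1) ^ l) *\<^sub>R rotz (2 * pi * of_int j / 15)) ** (((-1) ^ l') *\<^sub>R rotz (2 * pi * of_int j' / 15))
    = ((-1) ^ (l + l')) *\<^sub>R rotz (2 * pi * of_int (j + j') / 15)"
  by (simp add: scaleR_matrix_matrix_mult rotz_add power_add add_divide_distrib distrib_left)

lemma C30_mult_image:
  assumes "g \<in> C30"
  shows "(\<lambda>A. g ** A) ` C30 = C30"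
proof -
  obtain l j where g: "g = ((-1) ^ l) *\<^sub>R rotz (2 * pi * of_int j / 15)"
    using assms unfolding C30_eq by blast
  have "g ** A \<in> C30" if "A \<in> C30" for A
  proof -
    obtain l' j' where "A = ((-1) ^ l') *\<^sub>R rotz (2 * pi * of_int j' / 15)"
      using \<open>A \<in> C30\<close> unfolding C30_eq by blast
    then show ?thesis
      by (simp only: g C30_elem_mult C30_memI)
  qed
  moreover have "A \<in> (\<lambda>A. g ** A) ` C30" if "A \<in> C30" for A
  proof -
    obtain l' j' where A: "A = ((-1) ^ l') *\<^sub>R rotz (2 * pi * of_int j' / 15)"
      using \<open>A \<in> C30\<close> unfolding C30_eq by blast
    have "(-1::real) ^ (l + (l + l')) = (-1) ^ l'"
      by (simp add: minus_one_power_iff)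
    then have "A = g ** (((-1) ^ (l + l')) *\<^sub>R rotz (2 * pi * of_int (j' - j) / 15))"
      by (simp only: g A C30_elem_mult) simp
    then show ?thesis
      using C30_memI by blast
  qed
  ultimately show ?thesis
    by blast
qed

lemma orbit_image_invariant:
  assumes "(\<lambda>A. g ** A) ` G = G"
  shows "(\<lambda>x. g *v x) ` ((\<lambda>A. A *v c) ` G) = (\<lambda>A. A *v c) ` G"
proof -
  have "(\<lambda>x. g *v x) ` ((\<lambda>A. A *v c) ` G) = (\<lambda>A. A *v c) ` ((\<lambda>A. g ** A) ` G)"
    by (simp add: image_image matrix_vector_mul_assoc)
  then show ?thesis
    using assms by simp
qed

lemma noperthedron_invariant:
  "g \<in> C30 \<Longrightarrow> (\<lambda>x. g *v x) ` noperthedron = noperthedron"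
  by (simp add: noperthedron_def image_Un orbit_image_invariant C30_mult_image)

lemma image_noperthedron_eqI:
  assumes "g \<in> C30" and "\<And>P. f P = h (g *v P)"
  shows "f ` noperthedron = h ` noperthedron"
proof -
  have "f ` noperthedron = h ` (\<lambda>P. g *v P) ` noperthedron"
    by (simp add: assms(2) image_image)
  then show ?thesis
    by (simp add: noperthedron_invariant[OF assms(1)])
qed

theorem lemma2p3:
  fixes \<theta> \<phi> \<alpha> :: real
  shows "(\<lambda>P. projM (\<theta> + 2 * pi / 15) \<phi> *v P) ` noperthedron = (\<lambda>P. projM \<theta> \<phi> *v P) ` noperthedron \<and>
     (\<lambda>P. rot2 (\<alpha> + pi) *v (projM \<theta> \<phi> *v P)) ` noperthedron = (\<lambda>P. rot2 \<alpha> *v (projM \<theta> \<phi> *v P)) ` noperthedron \<and>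
     (\<lambda>P. flip2 *v (projM \<theta> \<phi> *v P)) ` noperthedron = (\<lambda>P. projM (\<theta> + pi / 15) (pi - \<phi>) *v P) ` noperthedron"
proof (intro conjI)
  show "(\<lambda>P. projM (\<theta> + 2 * pi / 15) \<phi> *v P) ` noperthedron = (\<lambda>P. projM \<theta> \<phi> *v P) ` noperthedron"
    by (rule image_noperthedron_eqI[OF C30_memI[of 0 "-1"]])
      (simp add: matrix_vector_mul_assoc projM_mult_rotz)
  show "(\<lambda>P. rot2 (\<alpha> + pi) *v (projM \<theta> \<phi> *v P)) ` noperthedron = (\<lambda>P. rot2 \<alpha> *v (projM \<theta> \<phi> *v P)) ` noperthedron"
    by (rule image_noperthedron_eqI[OF C30_memI[of 1 0]])
      (simp add: matrix_vector_mul_assoc rotz_zero rot2_add_pi matrix_mul_uminus_left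
        matrix_mul_uminus_right)
  show "(\<lambda>P. flip2 *v (projM \<theta> \<phi> *v P)) ` noperthedron = (\<lambda>P. projM (\<theta> + pi / 15) (pi - \<phi>) *v P) ` noperthedron"
    by (rule image_noperthedron_eqI[OF C30_memI[of 1 "-7"]])
      (simp add: matrix_vector_mul_assoc projM_mult_rotz flip2_mult_projM matrix_mul_uminus_right
        add.commute)
qed

end
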